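(* Let $c\in(0,1)$ and let $(G,\phi)$ be a (random) locally finite connected rooted undirected graph with degrees $(d_j)_{j\in V}$, and let $R_\phi$ be its root-PageRank with damping factor $c$. For $\alpha>0$ let $d_\phi^{(\ge\alpha)}=\#\{j\in V: j\sim\phi,\ d_j\ge\alpha\}$. Assume there exist $\alpha>0$ and $\varepsilon\in(0,1)$ such that, as $k\to\infty$, $$\mathbb{P}\big(d_\phi>k,\ d_\phi^{(\ge\alpha)}\ge(1-\varepsilon)d_\phi\big)=o\big(\mathbb{P}(d_\phi>k)\big).$$ Then $$\mathbb{P}(R_\phi>k)\ge(1+o(1))\,\mathbb{P}\Big(d_\phi>\frac{\alpha k}{\varepsilon c(1-c)}\Big)\qquad\text{as }k\to\infty.$$
   Context: A rooted graph is a pair $(G,\phi)$ with $G=(V,E)$ a graph and $\phi\in V$; it is locally finite if every vertex has finite degree; random rooted graphs are random elements of the space of locally finite connected rooted graphs up to root-preserving isomorphism. With $\boldsymbol{A}=(a_{ij})$ the adjacency matrix and $\boldsymbol{P}=(p_{ij})$, $p_{ij}=a_{ij}/d_i$ (a possibly infinite matrix), the root-PageRank is $R_\phi=(1-c)\sum_{s=0}^\infty c^s\sum_{j\in V}(\boldsymbol{P}^s)_{j\phi}$. $j\sim\phi$ means $j$ and $\phi$ are adjacent. $f=o(g)$ as $k\to\infty$ means $\limsup_{k\to\infty}|f(k)/g(k)|=0$. *)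

theory Defs
  imports "HOL-Probability.Probability" "HOL-Library.Landau_Symbols"
begin

definition lf_conn_rooted_graph :: "'v set \<Rightarrow> ('v \<Rightarrow> 'v \<Rightarrow> bool) \<Rightarrow> 'v \<Rightarrow> bool" where
  "lf_conn_rooted_graph V E phi \<longleftrightarrow>
     phi \<in> V \<and>
     (\<forall>i j. E i j \<longrightarrow> i \<in> V \<and> j \<in> V) \<and>
     (\<forall>i j. E i j \<longrightarrow> E j i) \<and>
     (\<forall>i. \<not> E i i) \<and>
     (\<forall>i\<in>V. finite {j. E i j}) \<and>
     (\<forall>j\<in>V. (phi, j) \<in> {(x, y). E x y}\<^sup>*)"

definition deg :: "('v \<Rightarrow> 'v \<Rightarrow> bool) \<Rightarrow> 'v \<Rightarrow> nat" where
  "deg E i = card {j. E i j}"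

text \<open>Entries of P^s, where p_ij = a_ij / d_i.\<close>
fun trans_pow :: "('v \<Rightarrow> 'v \<Rightarrow> bool) \<Rightarrow> nat \<Rightarrow> 'v \<Rightarrow> 'v \<Rightarrow> real" where
  "trans_pow E 0 i j = (if i = j then 1 else 0)"
| "trans_pow E (Suc s) i j = (\<Sum>k\<in>{k. E i k}. trans_pow E s k j / real (deg E i))"

definition pagerank :: "real \<Rightarrow> 'v set \<Rightarrow> ('v \<Rightarrow> 'v \<Rightarrow> bool) \<Rightarrow> 'v \<Rightarrow> ennreal" where
  "pagerank c V E phi =
     (\<Sum>s. ennreal ((1 - c) * c ^ s) * (\<Sum>\<^sub>\<infinity> j\<in>V. ennreal (trans_pow E s j phi)))"

definition deg_ge :: "real \<Rightarrow> ('v \<Rightarrow> 'v \<Rightarrow> bool) \<Rightarrow> 'v \<Rightarrow> nat" where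
  "deg_ge \<alpha> E phi = card {j. E phi j \<and> real (deg E j) \<ge> \<alpha>}"

end

theory Submission
  imports Defs
begin

text \<open>A neighbour \<open>j\<close> of the root sends mass \<open>1 / d_j\<close> to it in one step of the walk, so the
  \<open>s = 1\<close> term of the PageRank series alone gives \<open>R_\<phi> \<ge> c (1 - c) \<Sum>_{j \<sim> \<phi>} 1 / d_j\<close>.
  If fewer than \<open>(1 - \<epsilon>) d_\<phi>\<close> neighbours have degree at least \<open>\<alpha>\<close>, then more than \<open>\<epsilon> d_\<phi>\<close>
  neighbours contribute more than \<open>1 / \<alpha>\<close> each, so \<open>R_\<phi> > k\<close> once \<open>d_\<phi> > \<alpha> k / (\<epsilon> c (1 - c))\<close>.
  Hence the event \<open>d_\<phi> > \<alpha> k / (\<epsilon> c (1 - c))\<close> is covered by \<open>R_\<phi> > k\<close> together with an event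
  whose probability the hypothesis makes negligible.\<close>

lemma lf_conn_rooted_graph_finite_neighbours:
  assumes "lf_conn_rooted_graph V E phi"
  shows "finite {j. E i j}"
proof (cases "i \<in> V")
  case True
  then show ?thesis using assms unfolding lf_conn_rooted_graph_def by blast
next
  case False
  then have "{j. E i j} = {}" using assms unfolding lf_conn_rooted_graph_def by blast
  then show ?thesis by simp
qed

lemma lf_conn_rooted_graph_adjacent_sym:
  assumes "lf_conn_rooted_graph V E phi" and "E i j"
  shows "E j i"
  using assms unfolding lf_conn_rooted_graph_def by blast

lemma deg_pos_if_adjacent:
  assumes "finite {l. E j l}" and "E j i"
  shows "0 < deg E j"
  using assms unfolding deg_def by (auto simp: card_gt_0_iff)

lemma trans_pow_one_adjacent:
  assumes "finite {l. E j l}" and "E j i"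
  shows "trans_pow E 1 j i = 1 / real (deg E j)"
proof -
  have "trans_pow E 1 j i = (\<Sum>l\<in>{l. E j l}. if l = i then 1 / real (deg E j) else 0)"
    by (auto simp: One_nat_def intro: sum.cong)
  also have "\<dots> = 1 / real (deg E j)"
    using assms by (simp add: sum.delta)
  finally show ?thesis .
qed

lemma pagerank_ge_one_step_term:
  "ennreal ((1 - c) * c) * (\<Sum>\<^sub>\<infinity> j\<in>V. ennreal (trans_pow E 1 j phi)) \<le> pagerank c V E phi"
  using sum_le_suminf[of "\<lambda>s. ennreal ((1 - c) * c ^ s) * (\<Sum>\<^sub>\<infinity> j\<in>V. ennreal (trans_pow E s j phi))" "{1}"]
  unfolding pagerank_def by simp

lemma pagerank_ge_sum_inverse_deg_neighbours:
  assumes G: "lf_conn_rooted_graph V E phi" and c: "0 \<le> c" "c \<le> 1"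
  shows "ennreal ((1 - c) * c * (\<Sum>j | E phi j. 1 / real (deg E j))) \<le> pagerank c V E phi"
proof -
  let ?N = "{j. E phi j}"
  have fin: "finite {l. E i l}" for i
    using G by (rule lf_conn_rooted_graph_finite_neighbours)
  have NV: "?N \<subseteq> V"
    using G unfolding lf_conn_rooted_graph_def by blast
  have step: "trans_pow E 1 j phi = 1 / real (deg E j)" if "E phi j" for j
    using fin lf_conn_rooted_graph_adjacent_sym[OF G that] by (rule trans_pow_one_adjacent)
  have "ennreal (\<Sum>j\<in>?N. 1 / real (deg E j)) = (\<Sum>j\<in>?N. ennreal (1 / real (deg E j)))"
    by (rule sum_ennreal[symmetric]) simp
  also have "\<dots> = (\<Sum>j\<in>?N. ennreal (trans_pow E 1 j phi))"
    by (intro sum.cong refl) (metis step mem_Collect_eq)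
  also have "\<dots> = (\<Sum>\<^sub>\<infinity> j\<in>?N. ennreal (trans_pow E 1 j phi))"
    using fin by (rule infsum_finite[symmetric])
  also have "\<dots> \<le> (\<Sum>\<^sub>\<infinity> j\<in>V. ennreal (trans_pow E 1 j phi))"
    using NV by (intro infsum_mono_neutral) (auto intro: nonneg_summable_on_complete)
  finally have "ennreal ((1 - c) * c) * ennreal (\<Sum>j\<in>?N. 1 / real (deg E j))
      \<le> ennreal ((1 - c) * c) * (\<Sum>\<^sub>\<infinity> j\<in>V. ennreal (trans_pow E 1 j phi))"
    by (rule mult_left_mono) simp
  also have "\<dots> \<le> pagerank c V E phi"
    by (rule pagerank_ge_one_step_term)
  finally show ?thesis
    using c by (simp add: ennreal_mult sum_nonneg)
qed

lemma deg_eq_deg_ge_plus_card_low_degree: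
  assumes "finite {j. E phi j}"
  shows "deg E phi = deg_ge \<alpha> E phi + card {j. E phi j \<and> real (deg E j) < \<alpha>}"
proof -
  let ?H = "{j. E phi j \<and> real (deg E j) \<ge> \<alpha>}" and ?L = "{j. E phi j \<and> real (deg E j) < \<alpha>}"
  have "{j. E phi j} = ?H \<union> ?L" and "?H \<inter> ?L = {}"
    by auto
  moreover have "finite ?H" and "finite ?L"
    using assms by (auto intro: finite_subset)
  ultimately have "card {j. E phi j} = card ?H + card ?L"
    by (metis card_Un_disjoint)
  then show ?thesis
    unfolding deg_def deg_ge_def .
qed

lemma sum_inverse_deg_neighbours_ge_card_low_degree:
  assumes G: "lf_conn_rooted_graph V E phi" and "0 < \<alpha>"
  shows "real (card {j. E phi j \<and> real (deg E j) < \<alpha>}) / \<alpha> \<le> (\<Sum>j | E phi j. 1 / real (deg E j))"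
proof -
  let ?L = "{j. E phi j \<and> real (deg E j) < \<alpha>}"
  have fin: "finite {l. E i l}" for i
    using G by (rule lf_conn_rooted_graph_finite_neighbours)
  have "0 < deg E j" if "E phi j" for j
    using fin lf_conn_rooted_graph_adjacent_sym[OF G that] by (rule deg_pos_if_adjacent)
  then have "1 / \<alpha> \<le> 1 / real (deg E j)" if "j \<in> ?L" for j
    using that by (simp add: frac_le)
  then have "real (card ?L) / \<alpha> \<le> (\<Sum>j\<in>?L. 1 / real (deg E j))"
    using sum_mono[of ?L "\<lambda>_. 1 / \<alpha>"] by simp
  also have "\<dots> \<le> (\<Sum>j | E phi j. 1 / real (deg E j))"
    using fin by (intro sum_mono2) auto
  finally show ?thesis .
qed

lemma pagerank_gt_if_few_high_degree_neighbours:
  assumes G: "lf_conn_rooted_graph V E phi"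
    and c: "0 < c" "c < 1" and \<alpha>: "0 < \<alpha>" and \<epsilon>: "0 < \<epsilon>"
    and deg_large: "real (deg E phi) > \<alpha> * k / (\<epsilon> * c * (1 - c))"
    and few_high: "real (deg_ge \<alpha> E phi) < (1 - \<epsilon>) * real (deg E phi)"
  shows "pagerank c V E phi > ennreal k"
proof -
  define S where "S = (\<Sum>j | E phi j. 1 / real (deg E j))"
  have "finite {j. E phi j}"
    using G by (rule lf_conn_rooted_graph_finite_neighbours)
  then have "\<epsilon> * real (deg E phi) < real (card {j. E phi j \<and> real (deg E j) < \<alpha>})"
    using few_high deg_eq_deg_ge_plus_card_low_degree[of E phi \<alpha>] by (simp add: algebra_simps)
  then have "\<epsilon> * real (deg E phi) / \<alpha> < real (card {j. E phi j \<and> real (deg E j) < \<alpha>}) / \<alpha>"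
    using \<alpha> by (rule divide_strict_right_mono)
  also have "\<dots> \<le> S"
    unfolding S_def using G \<alpha> by (rule sum_inverse_deg_neighbours_ge_card_low_degree)
  finally have "\<epsilon> * real (deg E phi) / \<alpha> < S" .
  then have "(1 - c) * c * (\<epsilon> * real (deg E phi) / \<alpha>) < (1 - c) * c * S"
    using c by (intro mult_strict_left_mono) auto
  moreover have "k < (1 - c) * c * (\<epsilon> * real (deg E phi) / \<alpha>)"
    using deg_large c \<alpha> \<epsilon> by (simp add: field_simps)
  moreover have "0 \<le> (1 - c) * c * (\<epsilon> * real (deg E phi) / \<alpha>)"
    using c \<epsilon> \<alpha> by simp
  ultimately have "k < (1 - c) * c * S" and "0 < (1 - c) * c * S"
    by linarith+
  then have "ennreal k < ennreal ((1 - c) * c * S)"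
    by (simp add: ennreal_lessI)
  also have "\<dots> \<le> pagerank c V E phi"
    unfolding S_def using G c by (intro pagerank_ge_sum_inverse_deg_neighbours) auto
  finally show ?thesis .
qed

lemma ge_one_plus_vanishing_mult_if_le_plus_smallo:
  fixes a b r :: "'x \<Rightarrow> real"
  assumes "r \<in> o[F](b)"
    and "\<forall>\<^sub>F x in F. b x \<le> a x + r x" and "\<forall>\<^sub>F x in F. 0 \<le> a x"
  shows "\<exists>h. (h \<longlongrightarrow> 0) F \<and> (\<forall>\<^sub>F x in F. (1 + h x) * b x \<le> a x)"
proof (intro exI conjI)
  show "((\<lambda>x. - (r x / b x)) \<longlongrightarrow> 0) F"
    using tendsto_minus[OF smalloD_tendsto[OF assms(1)]] by simp
  show "\<forall>\<^sub>F x in F. (1 + - (r x / b x)) * b x \<le> a x"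
    using assms(2,3)
  proof eventually_elim
    case (elim x)
    \<comment> \<open>where \<open>b x = 0\<close>, division by zero makes \<open>h x = 0\<close> and the claim is just \<open>0 \<le> a x\<close>\<close>
    show ?case
    proof (cases "b x = 0")
      case False
      then have "(1 + - (r x / b x)) * b x = b x - r x"
        by (simp add: algebra_simps)
      then show ?thesis
        using elim by simp
    qed (use elim in simp)
  qed
qed

lemma deg_gt_events_subset_pagerank_gt_Un_many_high_degree:
  fixes phi :: "'a \<Rightarrow> 'v" and k :: real
  assumes "\<forall>\<omega>\<in>\<Omega>. lf_conn_rooted_graph (V \<omega>) (E \<omega>) (phi \<omega>)"
    and "0 < c" "c < 1" "0 < \<alpha>" "0 < \<epsilon>"
  defines "K \<equiv> \<alpha> * k / (\<epsilon> * c * (1 - c))"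
  shows "{\<omega> \<in> \<Omega>. real (deg (E \<omega>) (phi \<omega>)) > K}
    \<subseteq> {\<omega> \<in> \<Omega>. pagerank c (V \<omega>) (E \<omega>) (phi \<omega>) > ennreal k}
      \<union> {\<omega> \<in> \<Omega>. real (deg (E \<omega>) (phi \<omega>)) > K \<and>
          real (deg_ge \<alpha> (E \<omega>) (phi \<omega>)) \<ge> (1 - \<epsilon>) * real (deg (E \<omega>) (phi \<omega>))}"
    (is "?B \<subseteq> ?A \<union> ?C")
proof
  fix \<omega> assume \<omega>: "\<omega> \<in> ?B"
  then have "lf_conn_rooted_graph (V \<omega>) (E \<omega>) (phi \<omega>)"
    using assms(1) by blast
  then have "real (deg_ge \<alpha> (E \<omega>) (phi \<omega>)) < (1 - \<epsilon>) * real (deg (E \<omega>) (phi \<omega>)) \<Longrightarrow>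
      pagerank c (V \<omega>) (E \<omega>) (phi \<omega>) > ennreal k"
    using \<omega> assms(2-5) unfolding K_def by (intro pagerank_gt_if_few_high_degree_neighbours) auto
  then show "\<omega> \<in> ?A \<union> ?C"
    using \<omega> by (auto simp: not_le)
qed

lemma (in prob_space) prob_ge_one_plus_vanishing_mult_if_covered:
  assumes "(\<lambda>x. prob (C x)) \<in> o[F](\<lambda>x. prob (B x))"
    and "\<And>x. B x \<subseteq> A x \<union> C x" and "\<And>x. A x \<in> events" and "\<And>x. C x \<in> events"
  shows "\<exists>h. (h \<longlongrightarrow> 0) F \<and> (\<forall>\<^sub>F x in F. (1 + h x) * prob (B x) \<le> prob (A x))"
proof (rule ge_one_plus_vanishing_mult_if_le_plus_smallo[OF assms(1)])
  have "prob (B x) \<le> prob (A x) + prob (C x)" for x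
    using assms(2-4) by (meson finite_measure_mono measure_Un_le order_trans sets.Un)
  then show "\<forall>\<^sub>F x in F. prob (B x) \<le> prob (A x) + prob (C x)"
    by simp
qed simp

theorem mainTheorem4:
  fixes M :: "'a measure"
    and V :: "'a \<Rightarrow> 'v set"
    and E :: "'a \<Rightarrow> 'v \<Rightarrow> 'v \<Rightarrow> bool"
    and root :: "'a \<Rightarrow> 'v"
    and c \<alpha> \<epsilon> :: real
  assumes "prob_space M"
    and "0 < c" and "c < 1"
    and "\<forall>\<omega>\<in>space M. lf_conn_rooted_graph (V \<omega>) (E \<omega>) (root \<omega>)"
    and "(\<lambda>\<omega>. real (deg (E \<omega>) (root \<omega>))) \<in> borel_measurable M"
    and "(\<lambda>\<omega>. real (deg_ge \<alpha> (E \<omega>) (root \<omega>))) \<in> borel_measurable M"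
    and "(\<lambda>\<omega>. pagerank c (V \<omega>) (E \<omega>) (root \<omega>)) \<in> borel_measurable M"
    and "0 < \<alpha>" and "0 < \<epsilon>" and "\<epsilon> < 1"
    and "(\<lambda>k::real. measure M {\<omega> \<in> space M. real (deg (E \<omega>) (root \<omega>)) > k \<and>
              real (deg_ge \<alpha> (E \<omega>) (root \<omega>)) \<ge> (1 - \<epsilon>) * real (deg (E \<omega>) (root \<omega>))})
         \<in> o[at_top](\<lambda>k. measure M {\<omega> \<in> space M. real (deg (E \<omega>) (root \<omega>)) > k})"
  shows "\<exists>h :: real \<Rightarrow> real. (h \<longlongrightarrow> 0) at_top \<and>
           (\<forall>\<^sub>F k in at_top.
              measure M {\<omega> \<in> space M. pagerank c (V \<omega>) (E \<omega>) (root \<omega>) > ennreal k}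
              \<ge> (1 + h k) * measure M {\<omega> \<in> space M.
                     real (deg (E \<omega>) (root \<omega>)) > \<alpha> * k / (\<epsilon> * c * (1 - c))})"
proof -
  interpret prob_space M by fact
  define D where "D \<omega> = real (deg (E \<omega>) (root \<omega>))" for \<omega>
  define K where "K k = \<alpha> * k / (\<epsilon> * c * (1 - c))" for k
  define A where "A k = {\<omega> \<in> space M. pagerank c (V \<omega>) (E \<omega>) (root \<omega>) > ennreal k}" for k
  define B where "B k = {\<omega> \<in> space M. D \<omega> > K k}" for k
  define C where "C k = {\<omega> \<in> space M. D \<omega> > K k \<and>
    real (deg_ge \<alpha> (E \<omega>) (root \<omega>)) \<ge> (1 - \<epsilon>) * D \<omega>}" for k
  have K_eq: "K = (\<lambda>k. \<alpha> / (\<epsilon> * c * (1 - c)) * k)"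
    unfolding K_def by auto
  have "0 < \<alpha> / (\<epsilon> * c * (1 - c))"
    using assms(2,3,8,9) by simp
  then have "filterlim K at_top at_top"
    unfolding K_eq by (intro filterlim_tendsto_pos_mult_at_top[OF tendsto_const] filterlim_ident)
  then have "(\<lambda>k. prob (C k)) \<in> o[at_top](\<lambda>k. prob (B k))"
    unfolding B_def C_def D_def by (rule landau_o.small.compose[OF assms(11)])
  moreover have "B k \<subseteq> A k \<union> C k" for k
    unfolding A_def B_def C_def D_def K_def using assms(4,2,3,8,9)
    by (rule deg_gt_events_subset_pagerank_gt_Un_many_high_degree)
  moreover have "A k \<in> events" for k
    unfolding A_def using assms(7) by measurable
  moreover have "C k \<in> events" for k
    unfolding C_def D_def using assms(5,6) by measurable
  ultimately show ?thesis
    unfolding A_def B_def D_def K_def by (rule prob_ge_one_plus_vanishing_mult_if_covered)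
qed

end
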